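(* Let $k_1,k_2,k_3\ge2$ be integers and $M=S^2(k_1,k_2,k_3)$. For $N_1,N_2,N_3\in\mathbb{Z}_{\ge0}\cup\{\infty\}$ let $\mathcal{G}_{N_1,N_2,N_3}$ be the submodule of $\mathcal{S}(M)$ generated by the elements $S_{l_1}(a_1)S_{l_2}(a_2)S_{l_3}(a_3)$ with $0\le l_i\le N_i$. Then $\mathcal{G}_{k_1,k_2,\infty}=\mathcal{G}_{k_1,k_2,k_3}$.
   Context: $\mathcal{S}(M)$ is the Kauffman bracket skein module of $M$ over $\mathbb{Z}[A^{\pm1}]$. $S^2(k_1,k_2,k_3)$ is the Seifert manifold $\Sigma_{0,0}((k_1,1),(k_2,1),(k_3,1))$. $S_n$ are Chebyshev polynomials of the second kind ($S_0=1,S_1=x,S_{n+1}=xS_n-S_{n-1}$). $a_1,a_2,a_3$ are the three boundary-parallel curves of $\Sigma_{0,3}$, where $\Sigma_{0,3}\times I$ is the genus-two handlebody forming one side of the vertical Heegaard splitting of $M$, pushed into $M$; in $\mathcal{S}(M)$ these satisfy the relations that, in the symbol notation $s_i^n=S_n(a_i)$ (with $s_i^{-1}=0$, $s_i^n=-s_i^{-n-2}$ for $n\le-2$), the elements $R_{13}(n_1,n_2,n_3)-R_{13}(-n_1+k_1,n_2,-n_3+k_3)$ and $R_{23}(n_1,n_2,n_3)-R_{23}(n_1,-n_2+k_2,-n_3+k_3)$ vanish for all $n_i\in\mathbb{Z}$, where $R_{13}(n_1,n_2,n_3)=-A^{-n_1-n_3-2}s_1^{n_1}s_2^{n_2}s_3^{n_3}-A^{-n_1-n_3+2}s_1^{n_1-2}s_2^{n_2}s_3^{n_3-2}-A^{-n_1-n_3}s_1^{n_1-1}s_2^{n_2+1}s_3^{n_3-1}-A^{-n_1-n_3}s_1^{n_1-1}s_2^{n_2-1}s_3^{n_3-1}$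 and $R_{23}(n_1,n_2,n_3)=-A^{-n_2-n_3-2}s_1^{n_1}s_2^{n_2}s_3^{n_3}-A^{-n_2-n_3+2}s_1^{n_1}s_2^{n_2-2}s_3^{n_3-2}-A^{-n_2-n_3}s_1^{n_1+1}s_2^{n_2-1}s_3^{n_3-1}-A^{-n_2-n_3}s_1^{n_1-1}s_2^{n_2-1}s_3^{n_3-1}$ (and these generate all relations among the $S_{l_1}(a_1)S_{l_2}(a_2)S_{l_3}(a_3)$, which span $\mathcal{S}(M)$). *)

theory Defs
  imports Main "HOL-Library.Extended_Nat" "HOL-Library.Function_Algebras"
begin

text \<open>The free Z[A,A^-1]-module on the monomials S_l1(a1) S_l2(a2) S_l3(a3), l_i >= 0,
  viewed as a free Z-module with basis A^j * S_l1(a1) S_l2(a2) S_l3(a3), j in Z.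
  Elements are integer-valued functions on (j,l1,l2,l3) (finite support is automatic
  for everything generated below).\<close>

type_synonym elem = "int \<times> nat \<times> nat \<times> nat \<Rightarrow> int"

inductive_set zspan :: "elem set \<Rightarrow> elem set" for S :: "elem set" where
  zspan_zero: "0 \<in> zspan S"
| zspan_gen: "x \<in> S \<Longrightarrow> x \<in> zspan S"
| zspan_add: "x \<in> zspan S \<Longrightarrow> y \<in> zspan S \<Longrightarrow> x + y \<in> zspan S"
| zspan_neg: "x \<in> zspan S \<Longrightarrow> - x \<in> zspan S"

text \<open>Symbol convention: s^n = S_n(a) for n >= 0, s^(-1) = 0, s^n = - s^(-n-2) for n <= -2.
  Returns (sign, index).\<close>
definition symb :: "int \<Rightarrow> int \<times> nat" where
  "symb n = (if n \<ge> 0 then (1, nat n) else if n = -1 then (0, 0) else (-1, nat (-n-2)))"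

text \<open>The element A^j s_1^n1 s_2^n2 s_3^n3.\<close>
definition mon :: "int \<Rightarrow> int \<Rightarrow> int \<Rightarrow> int \<Rightarrow> elem" where
  "mon j n1 n2 n3 = (\<lambda>x. if x = (j, snd (symb n1), snd (symb n2), snd (symb n3))
                         then fst (symb n1) * fst (symb n2) * fst (symb n3) else 0)"

definition shiftA :: "int \<Rightarrow> elem \<Rightarrow> elem" where
  "shiftA j f = (\<lambda>(i, l). f (i - j, l))"

definition R13 :: "int \<Rightarrow> int \<Rightarrow> int \<Rightarrow> elem" where
  "R13 n1 n2 n3 =
     - mon (-n1-n3-2) n1 n2 n3
     - mon (-n1-n3+2) (n1-2) n2 (n3-2)
     - mon (-n1-n3) (n1-1) (n2+1) (n3-1)
     - mon (-n1-n3) (n1-1) (n2-1) (n3-1)"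

definition R23 :: "int \<Rightarrow> int \<Rightarrow> int \<Rightarrow> elem" where
  "R23 n1 n2 n3 =
     - mon (-n2-n3-2) n1 n2 n3
     - mon (-n2-n3+2) n1 (n2-2) (n3-2)
     - mon (-n2-n3) (n1+1) (n2-1) (n3-1)
     - mon (-n2-n3) (n1-1) (n2-1) (n3-1)"

text \<open>Z-generators of the relation submodule (Z[A^{+-1}]-span of the relations).\<close>
definition relgens :: "nat \<Rightarrow> nat \<Rightarrow> nat \<Rightarrow> elem set" where
  "relgens k1 k2 k3 =
     {shiftA j (R13 n1 n2 n3 - R13 (-n1 + int k1) n2 (-n3 + int k3)) | j n1 n2 n3. True}
   \<union> {shiftA j (R23 n1 n2 n3 - R23 n1 (-n2 + int k2) (-n3 + int k3)) | j n1 n2 n3. True}"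

text \<open>S(S^2(k1,k2,k3)) = free module / zspan (relgens k1 k2 k3).\<close>

definition basis_el :: "int \<Rightarrow> nat \<Rightarrow> nat \<Rightarrow> nat \<Rightarrow> elem" where
  "basis_el j l1 l2 l3 = (\<lambda>x. if x = (j, l1, l2, l3) then 1 else 0)"

text \<open>Preimage in the free module of the submodule G_{N1,N2,N3} of the skein module.\<close>
definition Gsub :: "nat \<Rightarrow> nat \<Rightarrow> nat \<Rightarrow> enat \<Rightarrow> enat \<Rightarrow> enat \<Rightarrow> elem set" where
  "Gsub k1 k2 k3 N1 N2 N3 =
     {x. \<exists>y \<in> zspan {basis_el j l1 l2 l3 | j l1 l2 l3.
                       enat l1 \<le> N1 \<and> enat l2 \<le> N2 \<and> enat l3 \<le> N3}.
         x - y \<in> zspan (relgens k1 k2 k3)}"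

end

theory Submission
  imports Defs
begin

text \<open>For l3 > k3 the relation
  R13(l1,l2,l3) - R13(k1-l1,l2,k3-l3) (if l2 < k2), or its R23 analogue (if l1 < k1),
  expresses s1^l1 s2^l2 s3^l3 through monomials whose first two indices stay within k1 and k2 and
  whose third index is below l3: the negative exponents k3-l3-... fold back to smaller indices via
  s^n = -s^(-n-2). In the corner l1 = k1, l2 = k2 the R13 relation contains the out-of-range term
  s1^(k1-1) s2^(k2+1) s3^(l3-1); it is removed first by an R23 relation, whose mirrored second
  index is -1, so that all its mirrored terms are in range.\<close>

lemma zspan_diff: "x \<in> zspan S \<Longrightarrow> y \<in> zspan S \<Longrightarrow> x - y \<in> zspan S"
  by (metis diff_conv_add_uminus zspan_add zspan_neg)

lemma zspan_minimal:
  assumes "S \<subseteq> zspan T"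
  shows "zspan S \<subseteq> zspan T"
proof
  fix x assume "x \<in> zspan S"
  then show "x \<in> zspan T"
    by induction (rule zspan_zero, use assms in blast, (rule zspan_add zspan_neg; assumption)+)
qed

lemma zspan_mono: "S \<subseteq> T \<Longrightarrow> zspan S \<subseteq> zspan T"
  by (rule zspan_minimal) (auto intro: zspan_gen)

definition bounded_basis :: "enat \<Rightarrow> enat \<Rightarrow> enat \<Rightarrow> elem set" where
  "bounded_basis N1 N2 N3 =
     {basis_el j l1 l2 l3 | j l1 l2 l3. enat l1 \<le> N1 \<and> enat l2 \<le> N2 \<and> enat l3 \<le> N3}"

lemma Gsub_eq_zspan:
  "Gsub k1 k2 k3 N1 N2 N3 = zspan (bounded_basis N1 N2 N3 \<union> relgens k1 k2 k3)"
proof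
  show "Gsub k1 k2 k3 N1 N2 N3 \<subseteq> zspan (bounded_basis N1 N2 N3 \<union> relgens k1 k2 k3)"
  proof
    fix x assume "x \<in> Gsub k1 k2 k3 N1 N2 N3"
    then obtain y where "y \<in> zspan (bounded_basis N1 N2 N3)" "x - y \<in> zspan (relgens k1 k2 k3)"
      unfolding Gsub_def bounded_basis_def by blast
    then have "(x - y) + y \<in> zspan (bounded_basis N1 N2 N3 \<union> relgens k1 k2 k3)"
      using zspan_mono[of _ "bounded_basis N1 N2 N3 \<union> relgens k1 k2 k3"] by (blast intro: zspan_add)
    then show "x \<in> zspan (bounded_basis N1 N2 N3 \<union> relgens k1 k2 k3)" by simp
  qed
next
  show "zspan (bounded_basis N1 N2 N3 \<union> relgens k1 k2 k3) \<subseteq> Gsub k1 k2 k3 N1 N2 N3"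
  proof
    fix x assume "x \<in> zspan (bounded_basis N1 N2 N3 \<union> relgens k1 k2 k3)"
    then have "\<exists>y \<in> zspan (bounded_basis N1 N2 N3). x - y \<in> zspan (relgens k1 k2 k3)"
    proof induction
      case zspan_zero
      show ?case by (rule bexI[of _ 0]) (simp_all only: diff_self zspan.zspan_zero)
    next
      case (zspan_gen x)
      then show ?case
      proof
        assume "x \<in> bounded_basis N1 N2 N3"
        then show ?thesis
          by (intro bexI[of _ x]) (simp_all only: diff_self zspan.zspan_zero zspan.zspan_gen)
      next
        assume "x \<in> relgens k1 k2 k3"
        then show ?thesis
          by (intro bexI[of _ 0]) (simp_all only: diff_zero zspan.zspan_zero zspan.zspan_gen)
      qed
    next
      case (zspan_add x x')
      then obtain y y' where "y \<in> zspan (bounded_basis N1 N2 N3)" "x - y \<in> zspan (relgens k1 k2 k3)"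
        "y' \<in> zspan (bounded_basis N1 N2 N3)" "x' - y' \<in> zspan (relgens k1 k2 k3)"
        by blast
      moreover have "x + x' - (y + y') = (x - y) + (x' - y')" by simp
      ultimately show ?case by (metis zspan.zspan_add)
    next
      case (zspan_neg x)
      then obtain y where "y \<in> zspan (bounded_basis N1 N2 N3)" "x - y \<in> zspan (relgens k1 k2 k3)"
        by blast
      moreover have "- x - (- y) = - (x - y)" by simp
      ultimately show ?case by (metis zspan.zspan_neg)
    qed
    then show "x \<in> Gsub k1 k2 k3 N1 N2 N3"
      unfolding Gsub_def bounded_basis_def by blast
  qed
qed

lemma snd_symb: "snd (symb n) = (if n \<ge> 0 then nat n else nat (- n - 2))"
  by (simp add: symb_def)

lemma mon_of_nat: "mon j (int l1) (int l2) (int l3) = basis_el j l1 l2 l3"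
  unfolding mon_def basis_el_def symb_def by (simp add: fun_eq_iff)

lemma mon_eq_0_of_minus_one: "n1 = -1 \<or> n2 = -1 \<or> n3 = -1 \<Longrightarrow> mon j n1 n2 n3 = 0"
  unfolding mon_def symb_def by (auto simp: fun_eq_iff)

lemma mon_in_zspanI:
  assumes "basis_el j (snd (symb n1)) (snd (symb n2)) (snd (symb n3)) \<in> zspan T"
  shows "mon j n1 n2 n3 \<in> zspan T"
proof -
  define c where "c = fst (symb n1) * fst (symb n2) * fst (symb n3)"
  have mon_eq:
    "mon j n1 n2 n3 = (\<lambda>x. c * basis_el j (snd (symb n1)) (snd (symb n2)) (snd (symb n3)) x)"
    unfolding mon_def basis_el_def c_def by (simp add: fun_eq_iff)
  have "c \<in> {-1, 0, 1}" unfolding c_def symb_def by simp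
  then consider "c = -1" | "c = 0" | "c = 1" by blast
  then show ?thesis
  proof cases
    case 1
    then have "mon j n1 n2 n3 = - basis_el j (snd (symb n1)) (snd (symb n2)) (snd (symb n3))"
      by (simp add: mon_eq fun_eq_iff)
    then show ?thesis using assms by (simp only: zspan_neg)
  next
    case 2
    then have "mon j n1 n2 n3 = 0" by (simp add: mon_eq fun_eq_iff)
    then show ?thesis by (simp only: zspan_zero)
  next
    case 3
    then show ?thesis using assms by (simp add: mon_eq)
  qed
qed

lemma shiftA_mon: "shiftA t (mon i n1 n2 n3) = mon (i + t) n1 n2 n3"
  unfolding shiftA_def mon_def by (auto simp: fun_eq_iff)

lemma shiftA_diff: "shiftA t (f - g) = shiftA t f - shiftA t g"
  unfolding shiftA_def by (auto simp: fun_eq_iff)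

lemma shiftA_uminus: "shiftA t (- f) = - shiftA t f"
  unfolding shiftA_def by (auto simp: fun_eq_iff)

lemma shiftA_R13:
  "shiftA t (R13 n1 n2 n3) =
     - mon (t - n1 - n3 - 2) n1 n2 n3 - mon (t - n1 - n3 + 2) (n1 - 2) n2 (n3 - 2)
     - mon (t - n1 - n3) (n1 - 1) (n2 + 1) (n3 - 1) - mon (t - n1 - n3) (n1 - 1) (n2 - 1) (n3 - 1)"
  by (simp only: R13_def shiftA_diff shiftA_uminus shiftA_mon) (simp add: algebra_simps)

lemma shiftA_R23:
  "shiftA t (R23 n1 n2 n3) =
     - mon (t - n2 - n3 - 2) n1 n2 n3 - mon (t - n2 - n3 + 2) n1 (n2 - 2) (n3 - 2)
     - mon (t - n2 - n3) (n1 + 1) (n2 - 1) (n3 - 1) - mon (t - n2 - n3) (n1 - 1) (n2 - 1) (n3 - 1)"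
  by (simp only: R23_def shiftA_diff shiftA_uminus shiftA_mon) (simp add: algebra_simps)

lemma R13_leading_mon_in_zspan:
  fixes k1 k2 k3 :: nat and n1 n2 n3 :: int
  defines "m1 \<equiv> int k1 - n1" and "m3 \<equiv> int k3 - n3"
  assumes "relgens k1 k2 k3 \<subseteq> T"
    and "\<And>i. mon i (n1 - 2) n2 (n3 - 2) \<in> zspan T"
    and "\<And>i. mon i (n1 - 1) (n2 + 1) (n3 - 1) \<in> zspan T"
    and "\<And>i. mon i (n1 - 1) (n2 - 1) (n3 - 1) \<in> zspan T"
    and "\<And>i. mon i m1 n2 m3 \<in> zspan T"
    and "\<And>i. mon i (m1 - 2) n2 (m3 - 2) \<in> zspan T"
    and "\<And>i. mon i (m1 - 1) (n2 + 1) (m3 - 1) \<in> zspan T"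
    and "\<And>i. mon i (m1 - 1) (n2 - 1) (m3 - 1) \<in> zspan T"
  shows "mon j n1 n2 n3 \<in> zspan T"
proof -
  define t where "t = j + n1 + n3 + 2"
  define r where "r = shiftA t (R13 n1 n2 n3 - R13 m1 n2 m3)"
  have "r \<in> relgens k1 k2 k3"
    unfolding r_def m1_def m3_def relgens_def by force
  with assms(3) have "r \<in> zspan T" by (blast intro: zspan_gen)
  moreover have "mon j n1 n2 n3 = - r
      - mon (t - n1 - n3 + 2) (n1 - 2) n2 (n3 - 2) - mon (t - n1 - n3) (n1 - 1) (n2 + 1) (n3 - 1)
      - mon (t - n1 - n3) (n1 - 1) (n2 - 1) (n3 - 1)
      + mon (t - m1 - m3 - 2) m1 n2 m3 + mon (t - m1 - m3 + 2) (m1 - 2) n2 (m3 - 2)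
      + mon (t - m1 - m3) (m1 - 1) (n2 + 1) (m3 - 1) + mon (t - m1 - m3) (m1 - 1) (n2 - 1) (m3 - 1)"
    by (simp add: r_def shiftA_diff shiftA_R13 t_def)
  ultimately show ?thesis
    by (simp only:) (intro zspan_add zspan_diff zspan_neg assms(4-))
qed

lemma R23_leading_mon_in_zspan:
  fixes k1 k2 k3 :: nat and n1 n2 n3 :: int
  defines "m2 \<equiv> int k2 - n2" and "m3 \<equiv> int k3 - n3"
  assumes "relgens k1 k2 k3 \<subseteq> T"
    and "\<And>i. mon i n1 (n2 - 2) (n3 - 2) \<in> zspan T"
    and "\<And>i. mon i (n1 + 1) (n2 - 1) (n3 - 1) \<in> zspan T"
    and "\<And>i. mon i (n1 - 1) (n2 - 1) (n3 - 1) \<in> zspan T"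
    and "\<And>i. mon i n1 m2 m3 \<in> zspan T"
    and "\<And>i. mon i n1 (m2 - 2) (m3 - 2) \<in> zspan T"
    and "\<And>i. mon i (n1 + 1) (m2 - 1) (m3 - 1) \<in> zspan T"
    and "\<And>i. mon i (n1 - 1) (m2 - 1) (m3 - 1) \<in> zspan T"
  shows "mon j n1 n2 n3 \<in> zspan T"
proof -
  define t where "t = j + n2 + n3 + 2"
  define r where "r = shiftA t (R23 n1 n2 n3 - R23 n1 m2 m3)"
  have "r \<in> relgens k1 k2 k3"
    unfolding r_def m2_def m3_def relgens_def by force
  with assms(3) have "r \<in> zspan T" by (blast intro: zspan_gen)
  moreover have "mon j n1 n2 n3 = - r
      - mon (t - n2 - n3 + 2) n1 (n2 - 2) (n3 - 2) - mon (t - n2 - n3) (n1 + 1) (n2 - 1) (n3 - 1)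
      - mon (t - n2 - n3) (n1 - 1) (n2 - 1) (n3 - 1)
      + mon (t - m2 - m3 - 2) n1 m2 m3 + mon (t - m2 - m3 + 2) n1 (m2 - 2) (m3 - 2)
      + mon (t - m2 - m3) (n1 + 1) (m2 - 1) (m3 - 1) + mon (t - m2 - m3) (n1 - 1) (m2 - 1) (m3 - 1)"
    by (simp add: r_def shiftA_diff shiftA_R23 t_def)
  ultimately show ?thesis
    by (simp only:) (intro zspan_add zspan_diff zspan_neg assms(4-))
qed

lemma basis_el_in_Gsub_bounded:
  assumes "k1 \<ge> 2" "k2 \<ge> 2" "k3 \<ge> 2" "l1 \<le> k1" "l2 \<le> k2"
  shows "basis_el j l1 l2 l3 \<in> Gsub k1 k2 k3 (enat k1) (enat k2) (enat k3)"
  using assms(4,5)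
proof (induction l3 arbitrary: j l1 l2 rule: less_induct)
  case (less l3)
  define T where "T = bounded_basis k1 k2 k3 \<union> relgens k1 k2 k3"
  have G_eq: "Gsub k1 k2 k3 (enat k1) (enat k2) (enat k3) = zspan T"
    unfolding T_def by (rule Gsub_eq_zspan)
  have rels: "relgens k1 k2 k3 \<subseteq> T"
    unfolding T_def by blast
  show ?case
  proof (cases "l3 \<le> k3")
    case True
    with less.prems have "basis_el j l1 l2 l3 \<in> T"
      unfolding T_def bounded_basis_def by auto
    then show ?thesis unfolding G_eq by (rule zspan_gen)
  next
    case False
    have lower: "mon i n1 n2 n3 \<in> zspan T"
      if "snd (symb n1) \<le> k1" "snd (symb n2) \<le> k2" "snd (symb n3) < l3" for i n1 n2 n3
      using less.IH[OF that(3,1,2)] unfolding G_eq by (rule mon_in_zspanI)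
    have "mon j (int l1) (int l2) (int l3) \<in> zspan T" if "l1 \<le> k1" "l2 < k2" for j l1 l2
      by (rule R13_leading_mon_in_zspan[OF rels]; rule lower)
        (use that False assms(1-3) in \<open>auto simp: snd_symb\<close>)
    moreover have "mon j (int l1) (int l2) (int l3) \<in> zspan T" if "l1 < k1" "l2 \<le> k2" for j l1 l2
      by (rule R23_leading_mon_in_zspan[OF rels]; rule lower)
        (use that False assms(1-3) in \<open>auto simp: snd_symb\<close>)
    moreover have "mon j (int k1) (int k2) (int l3) \<in> zspan T" for j
    proof (rule R13_leading_mon_in_zspan[OF rels])
      show "mon i (int k1 - 1) (int k2 + 1) (int l3 - 1) \<in> zspan T" for i
        by (rule R23_leading_mon_in_zspan[OF rels]; rule lower)
          (use False assms(1-3) in \<open>auto simp: snd_symb\<close>)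
      show "mon i (int k1 - int k1 - 1) (int k2 + 1) (int k3 - int l3 - 1) \<in> zspan T" for i
        by (simp add: mon_eq_0_of_minus_one zspan_zero)
    qed (rule lower; use False assms(1-3) in \<open>auto simp: snd_symb\<close>)+
    ultimately show ?thesis
      using less.prems unfolding G_eq mon_of_nat[symmetric]
      by (metis le_less)
  qed
qed

theorem lemma5p1:
  fixes k1 k2 k3 :: nat
  assumes "k1 \<ge> 2" and "k2 \<ge> 2" and "k3 \<ge> 2"
  shows "Gsub k1 k2 k3 (enat k1) (enat k2) \<infinity> = Gsub k1 k2 k3 (enat k1) (enat k2) (enat k3)"
proof
  have "bounded_basis (enat k1) (enat k2) \<infinity> \<subseteq> Gsub k1 k2 k3 (enat k1) (enat k2) (enat k3)"
    unfolding bounded_basis_def using basis_el_in_Gsub_bounded[OF assms] by auto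
  then show "Gsub k1 k2 k3 (enat k1) (enat k2) \<infinity> \<subseteq> Gsub k1 k2 k3 (enat k1) (enat k2) (enat k3)"
    unfolding Gsub_eq_zspan by (intro zspan_minimal) (auto intro: zspan_gen)
next
  have "bounded_basis (enat k1) (enat k2) (enat k3) \<subseteq> bounded_basis (enat k1) (enat k2) \<infinity>"
    unfolding bounded_basis_def by auto
  then show "Gsub k1 k2 k3 (enat k1) (enat k2) (enat k3) \<subseteq> Gsub k1 k2 k3 (enat k1) (enat k2) \<infinity>"
    unfolding Gsub_eq_zspan by (intro zspan_mono) auto
qed

end
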